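(* Consider the algorithm described in the context. Suppose $f$ is bounded below by $f_{\mathrm{low}}$, twice continuously differentiable with $L_H$-Lipschitz continuous Hessian, and $\|\nabla^2 f(\mathbf{x}_k)\|\leq M$ for all $k$, for some $M>0$. Fix $\epsilon>0$ and an iteration $k$ such that $$\theta := (1-\alpha)^2 - \frac{4M(r-1)\alpha^2}{\epsilon(1-\alpha)^2} > 0,$$ $P_k$ is well-aligned and $\sigma_k\geq\epsilon$. If iteration $k$ is successful, then $$\hat\sigma^m_k\geq c_1\epsilon,\qquad c_1:=\frac{\min(1-\alpha,(1-\alpha)^2,\theta)}{1+\kappa_\sigma\mu^{-1}},\qquad \kappa_\sigma:=\max(\kappa_{\mathrm{eg}}\Delta_{\max},\kappa_{\mathrm{eh}}).$$
   Context: Algorithm: Let $f:\mathbb{R}^n\to\mathbb{R}$. Fix $\mathbf{x}_0$, $p\in\{1,\ldots,n\}$, $0<\Delta_0\leq\Delta_{\max}$, $0<\gamma_{\mathrm{dec}}<1<\gamma_{\mathrm{inc}}$, $\eta\in(0,1)$, $\mu>0$. For $k=0,1,\ldots$: select a random $P_k\in\mathbb{R}^{n\times p}$; build $\hat m_k(\hat{\mathbf{s}})=f(\mathbf{x}_k)+\hat{\mathbf{g}}_k^T\hat{\mathbf{s}}+\frac12\hat{\mathbf{s}}^T\hat H_k\hat{\mathbf{s}}$ ($\hat H_k$ symmetric) which is $P_k$-fully quadratic: constants $\kappa_{\mathrm{ef}},\kappa_{\mathrm{eg}},\kappa_{\mathrm{eh}}>0$ independent of $k$ with $|f(\mathbf{x}_k+P_k\hat{\mathbf{s}})-\hat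 m_k(\hat{\mathbf{s}})|\leq\kappa_{\mathrm{ef}}\Delta_k^3$, $\|P_k^T\nabla f(\mathbf{x}_k+P_k\hat{\mathbf{s}})-\nabla\hat m_k(\hat{\mathbf{s}})\|\leq\kappa_{\mathrm{eg}}\Delta_k^2$, $\|P_k^T\nabla^2 f(\mathbf{x}_k+P_k\hat{\mathbf{s}})P_k-\hat H_k\|\leq\kappa_{\mathrm{eh}}\Delta_k$ for all $\|\hat{\mathbf{s}}\|\leq\Delta_k$; compute a step $\hat{\mathbf{s}}_k$ with $\|\hat{\mathbf{s}}_k\|\leq\Delta_k$; let $R_k:=\frac{f(\mathbf{x}_k)-f(\mathbf{x}_k+P_k\hat{\mathbf{s}}_k)}{\hat m_k(\mathbf{0})-\hat m_k(\hat{\mathbf{s}}_k)}$, $\hat\tau^m_k:=\max(-\lambda_{\min}(\hat H_k),0)$, $\hat\sigma^m_k:=\max(\|\hat{\mathbf{g}}_k\|,\hat\tau^m_k)$; if $R_k\geq\eta$ and $\hat\sigma^m_k\geq\mu\Delta_k$ the iteration is successful: $\mathbf{x}_{k+1}=\mathbf{x}_k+P_k\hat{\mathbf{s}}_k$, $\Delta_{k+1}=\min(\gamma_{\mathrm{inc}}\Delta_k,\Delta_{\max})$; otherwise unsuccessful: $\mathbf{x}_{k+1}=\mathbf{x}_k$, $\Delta_{k+1}=\gamma_{\mathrm{dec}}\Delta_k$. Criticality: $\tau_k:=\max(-\lambda_{\min}(\nabla^2 f(\mathbf{x}_k)),0)$, $\sigma_k:=\max(\|\nabla f(\mathbf{x}_k)\|,\tau_k)$.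 Well-alignment: write $\nabla^2 f(\mathbf{x}_k)=\sum_{i=1}^r\lambda_i\mathbf{v}_i\mathbf{v}_i^T$, $\lambda_1\geq\cdots\geq\lambda_r$, $r=\operatorname{rank}(\nabla^2 f(\mathbf{x}_k))$, $\mathbf{v}_i$ orthonormal, $\hat{\mathbf{v}}_i:=P_k^T\mathbf{v}_i$; $P_k$ is well-aligned if $\|P_k\|\leq P_{\max}$, $\|P_k^T\nabla f(\mathbf{x}_k)\|\geq(1-\alpha)\|\nabla f(\mathbf{x}_k)\|$, $\|\hat{\mathbf{v}}_r\|\geq1-\alpha$, and $(\hat{\mathbf{v}}_i^T\hat{\mathbf{v}}_r)^2\leq4\alpha^2$ for $i=1,\ldots,r-1$, for fixed $\alpha\in(0,1)$, $P_{\max}>0$ independent of $k$. *)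

theory Defs
  imports "HOL-Analysis.Analysis"
begin

(* Matrices are Cartesian: an n x p matrix is real^'p^'n (rows indexed by 'n).
   The matrix norm is the operator (spectral) norm, i.e. onorm of x \<mapsto> A *v x. *)

definition mat_norm :: "real^'p^'n \<Rightarrow> real" where
  "mat_norm A = onorm (\<lambda>x. A *v x)"

definition is_eigenvalue :: "real^'n^'n \<Rightarrow> real \<Rightarrow> bool" where
  "is_eigenvalue A l \<longleftrightarrow> (\<exists>v. v \<noteq> 0 \<and> A *v v = l *\<^sub>R v)"

(* smallest (real) eigenvalue; applied only to symmetric matrices *)
definition lambda_min :: "real^'n^'n \<Rightarrow> real" where
  "lambda_min A = Min {l. is_eigenvalue A l}"

definition outer :: "real^'n \<Rightarrow> real^'n^'n" where
  "outer v = (\<chi> i j. v $ i * v $ j)"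

definition tau_crit :: "real^'n^'n \<Rightarrow> real" where
  "tau_crit A = max (- lambda_min A) 0"

definition sigma_crit :: "real^'n \<Rightarrow> real^'n^'n \<Rightarrow> real" where
  "sigma_crit g A = max (norm g) (tau_crit A)"

definition qmodel :: "real \<Rightarrow> real^'p \<Rightarrow> real^'p^'p \<Rightarrow> real^'p \<Rightarrow> real" where
  "qmodel fx g H s = fx + g \<bullet> s + (1/2) * (s \<bullet> (H *v s))"

definition eig_decomp :: "real^'n^'n \<Rightarrow> (nat \<Rightarrow> real) \<Rightarrow> (nat \<Rightarrow> real^'n) \<Rightarrow> bool" where
  "eig_decomp A lam v \<longleftrightarrow>
     A = (\<Sum>i\<in>{1..rank A}. lam i *\<^sub>R outer (v i)) \<and>
     (\<forall>i\<in>{1..rank A}. \<forall>j\<in>{1..rank A}. i \<le> j \<longrightarrow> lam j \<le> lam i) \<and>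
     (\<forall>i\<in>{1..rank A}. \<forall>j\<in>{1..rank A}. v i \<bullet> v j = (if i = j then 1 else 0))"

definition well_aligned ::
  "real \<Rightarrow> real \<Rightarrow> real^'p^'n \<Rightarrow> real^'n \<Rightarrow> real^'n^'n \<Rightarrow> bool" where
  "well_aligned \<alpha> Pmax P g A \<longleftrightarrow>
     mat_norm P \<le> Pmax \<and>
     norm (transpose P *v g) \<ge> (1 - \<alpha>) * norm g \<and>
     (\<exists>lam v. eig_decomp A lam v \<and>
        (let r = rank A; vh = (\<lambda>i. transpose P *v v i) in
           norm (vh r) \<ge> 1 - \<alpha> \<and>
           (\<forall>i\<in>{1..<r}. (vh i \<bullet> vh r)^2 \<le> 4 * \<alpha>^2)))"

(* success test of iteration with data fx = f(x_k), fnew = f(x_k + P_k s_k) *)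
definition ratio_R :: "real \<Rightarrow> real \<Rightarrow> real^'p \<Rightarrow> real^'p^'p \<Rightarrow> real^'p \<Rightarrow> real" where
  "ratio_R fx fnew g H s = (fx - fnew) / (qmodel fx g H 0 - qmodel fx g H s)"

definition sigma_model :: "real^'p \<Rightarrow> real^'p^'p \<Rightarrow> real" where
  "sigma_model g H = max (norm g) (max (- lambda_min H) 0)"

definition successful ::
  "real \<Rightarrow> real \<Rightarrow> real \<Rightarrow> real \<Rightarrow> real^'p \<Rightarrow> real^'p^'p \<Rightarrow> real^'p \<Rightarrow> real \<Rightarrow> bool" where
  "successful \<eta> \<mu> fx fnew g H s Delta \<longleftrightarrow>
     ratio_R fx fnew g H s \<ge> \<eta> \<and> sigma_model g H \<ge> \<mu> * Delta"

end

(*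
  Since sigma_k >= eps, either the gradient or the negative curvature of f at x_k is of size eps.
  In the first case alignment gives |P^T grad f| >= (1 - alpha) eps, and the model gradient differs
  from P^T grad f by at most kappa_eg Delta_k^2.  In the second case the last eigenvalue lam_r of the
  Hessian is <= -eps; testing the model Hessian on u = P^T v_r, whose overlap with the other
  projected eigenvectors is at most 2 alpha, gives
    lambda_min(H_k) |u|^2 <= lam_r |u|^4 + 4 M alpha^2 (r - 1) + kappa_eh Delta_k |u|^2,
  and |u| >= 1 - alpha turns this into -lambda_min(H_k) >= eps theta - kappa_eh Delta_k.
  Either way the model criticality is at least c eps - kappa_sigma Delta_k, and the success test
  mu Delta_k <= sigma^m_k absorbs the Delta_k term.
*)
theory Submission
  imports Defs
begin

lemma nonneg_quadratic_imp_linear_coeff_zero: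
  fixes a b :: real
  assumes nonneg: "\<And>t. 0 \<le> 2 * t * b + t^2 * a" and "0 \<le> b"
  shows "b = 0"
proof (rule ccontr)
  assume "b \<noteq> 0"
  with \<open>0 \<le> b\<close> have "0 < b" by simp
  define t where "t = - b / (\<bar>a\<bar> + 1)"
  have "t < 0"
    using \<open>0 < b\<close> by (simp add: t_def divide_neg_pos)
  have "\<bar>t * a\<bar> \<le> b"
    using \<open>0 < b\<close> by (simp add: t_def abs_mult field_simps)
  then have "t * (2 * b + t * a) < 0"
    using \<open>t < 0\<close> \<open>0 < b\<close> by (intro mult_neg_pos) linarith+
  with nonneg[of t] show False
    by (simp add: power2_eq_square algebra_simps)
qed

lemma outer_mult_vec: "outer v *v w = (v \<bullet> w) *\<^sub>R v"
proof -
  have "(\<Sum>j\<in>UNIV. v $ i * v $ j * w $ j) = (\<Sum>j\<in>UNIV. v $ j * w $ j) * v $ i" for i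
    by (simp add: sum_distrib_left sum_distrib_right mult_ac)
  then show ?thesis
    by (simp add: vec_eq_iff outer_def matrix_vector_mult_def inner_vec_def)
qed

lemma sum_scaleR_matrix_vector_mult:
  fixes A :: "'a \<Rightarrow> real^'n^'m"
  shows "finite I \<Longrightarrow> (\<Sum>i\<in>I. c i *\<^sub>R A i) *v w = (\<Sum>i\<in>I. c i *\<^sub>R (A i *v w))"
  by (induction I rule: finite_induct)
     (auto simp: matrix_vector_mult_add_rdistrib scaleR_matrix_vector_assoc)

lemma mat_norm_nonneg: "0 \<le> mat_norm A"
  unfolding mat_norm_def by (rule onorm_pos_le) simp

lemma norm_matrix_vector_le: "norm (A *v u) \<le> mat_norm A * norm u"
  unfolding mat_norm_def by (rule onorm) simp

lemma abs_quadratic_form_le: "\<bar>u \<bullet> (A *v u)\<bar> \<le> mat_norm A * (norm u)^2"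
proof -
  have "\<bar>u \<bullet> (A *v u)\<bar> \<le> norm u * norm (A *v u)"
    by (rule Cauchy_Schwarz_ineq2)
  also have "\<dots> \<le> norm u * (mat_norm A * norm u)"
    by (simp add: norm_matrix_vector_le mult_left_mono)
  finally show ?thesis
    by (simp add: power2_eq_square mult_ac)
qed

lemma symmetric_matrix_inner_swap:
  fixes A :: "real^'n^'n"
  shows "transpose A = A \<Longrightarrow> u \<bullet> (A *v w) = (A *v u) \<bullet> w"
  by (metis dot_lmul_matrix transpose_matrix_vector)

lemma psd_quadratic_form_zero_imp_kernel:
  fixes S :: "real^'n^'n"
  assumes sym: "transpose S = S"
    and psd: "\<And>w. 0 \<le> w \<bullet> (S *v w)"
    and zero: "u \<bullet> (S *v u) = 0"
  shows "S *v u = 0"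
proof -
  define d where "d = S *v u"
  have "0 \<le> 2 * t * (d \<bullet> d) + t^2 * (d \<bullet> (S *v d))" for t
  proof -
    have "u \<bullet> (S *v d) = d \<bullet> d" "d \<bullet> (S *v u) = d \<bullet> d"
      using symmetric_matrix_inner_swap[OF sym] by (auto simp: d_def)
    then have "(u + t *\<^sub>R d) \<bullet> (S *v (u + t *\<^sub>R d)) = 2 * t * (d \<bullet> d) + t^2 * (d \<bullet> (S *v d))"
      using zero by (simp add: power2_eq_square algebra_simps)
    with psd show ?thesis by metis
  qed
  then have "d \<bullet> d = 0"
    by (rule nonneg_quadratic_imp_linear_coeff_zero) simp
  then show ?thesis
    by (simp add: d_def)
qed

lemma symmetric_eigenvectors_orthogonal:
  fixes A :: "real^'n^'n"
  assumes "transpose A = A" "A *v x = a *\<^sub>R x" "A *v y = b *\<^sub>R y" "a \<noteq> b"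
  shows "orthogonal x y"
proof -
  have "a * (x \<bullet> y) = (A *v x) \<bullet> y"
    using assms(2) by simp
  also have "\<dots> = x \<bullet> (A *v y)"
    using symmetric_matrix_inner_swap[OF assms(1)] by simp
  also have "\<dots> = b * (x \<bullet> y)"
    using assms(3) by simp
  finally have "(a - b) * (x \<bullet> y) = 0"
    by (simp add: algebra_simps)
  with assms(4) show ?thesis
    by (simp add: orthogonal_def)
qed

lemma finite_eigenvalues_symmetric:
  fixes A :: "real^'n^'n"
  assumes sym: "transpose A = A"
  shows "finite {l. is_eigenvalue A l}"
proof -
  define S where "S = {l. is_eigenvalue A l}"
  define ev where "ev l = (SOME w. w \<noteq> 0 \<and> A *v w = l *\<^sub>R w)" for l
  have ev: "ev l \<noteq> 0 \<and> A *v ev l = l *\<^sub>R ev l" if "l \<in> S" for l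
    using that unfolding S_def is_eigenvalue_def ev_def by (metis (mono_tags, lifting) mem_Collect_eq)
  have "inj_on ev S"
  proof (rule inj_onI)
    fix a b assume "a \<in> S" "b \<in> S" "ev a = ev b"
    then have "(a - b) *\<^sub>R ev a = 0"
      using ev by (metis scaleR_left_diff_distrib diff_self)
    with ev \<open>a \<in> S\<close> show "a = b" by simp
  qed
  moreover have "finite (ev ` S)"
  proof (rule finiteI_independent, rule pairwise_orthogonal_independent)
    show "pairwise orthogonal (ev ` S)"
      using ev symmetric_eigenvectors_orthogonal[OF sym] unfolding pairwise_def by (metis imageE)
    show "0 \<notin> ev ` S"
      using ev by force
  qed
  ultimately show ?thesis
    using S_def finite_imageD by blast
qed

lemma symmetric_rayleigh_minimum:
  fixes A :: "real^'n^'n"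
  assumes sym: "transpose A = A"
  obtains m where "is_eigenvalue A m" "\<And>u. m * (norm u)^2 \<le> u \<bullet> (A *v u)"
proof -
  define q where "q u = u \<bullet> (A *v u)" for u :: "real^'n"
  have "continuous_on (sphere 0 1) q"
    unfolding q_def by (intro continuous_intros linear_continuous_on matrix_vector_mul_bounded_linear)
  moreover have "sphere (0::real^'n) 1 \<noteq> {}"
    using vector_choose_size[of 1] by auto
  ultimately obtain u0 where u0: "norm u0 = 1" and min: "\<And>y. norm y = 1 \<Longrightarrow> q u0 \<le> q y"
    using continuous_attains_inf[OF compact_sphere] by (metis mem_sphere_0)
  define m where "m = q u0"
  have rayleigh: "m * (norm u)^2 \<le> q u" for u
  proof (cases "u = 0")
    case True
    then show ?thesis by (simp add: q_def)
  next
    case False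
    then have "m \<le> q (u /\<^sub>R norm u)"
      using min by (simp add: m_def)
    also have "q (u /\<^sub>R norm u) = q u / (norm u)^2"
      by (simp add: q_def matrix_vector_mult_scaleR power2_eq_square field_simps)
    finally show ?thesis
      using False by (simp add: le_divide_eq)
  qed
  \<comment> \<open>A - m I is positive semidefinite and vanishes on u0 as a quadratic form\<close>
  define S where "S = A - m *\<^sub>R mat 1"
  have S_mult: "S *v w = A *v w - m *\<^sub>R w" for w
    by (simp add: S_def matrix_vector_mult_diff_rdistrib flip: scaleR_matrix_vector_assoc)
  have "S *v u0 = 0"
  proof (rule psd_quadratic_form_zero_imp_kernel)
    show "transpose S = S"
      using sym by (simp add: S_def transpose_def vec_eq_iff mat_def)
    show "0 \<le> w \<bullet> (S *v w)" for w
      using rayleigh[of w] by (simp add: S_mult q_def inner_diff_right power2_norm_eq_inner)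
    show "u0 \<bullet> (S *v u0) = 0"
      using u0 by (simp add: S_mult m_def q_def inner_diff_right norm_eq_1)
  qed
  with u0 have "is_eigenvalue A m"
    unfolding is_eigenvalue_def by (intro exI[of _ u0]) (auto simp: S_mult)
  with rayleigh show thesis
    by (simp add: that q_def)
qed

lemma
  fixes A :: "real^'n^'n"
  assumes sym: "transpose A = A"
  shows is_eigenvalue_lambda_min: "is_eigenvalue A (lambda_min A)"
    and lambda_min_le_rayleigh: "lambda_min A * (norm u)^2 \<le> u \<bullet> (A *v u)"
proof -
  obtain m where eig: "is_eigenvalue A m" and rayleigh: "\<And>u. m * (norm u)^2 \<le> u \<bullet> (A *v u)"
    using symmetric_rayleigh_minimum[OF sym] by blast
  have fin: "finite {l. is_eigenvalue A l}"
    using finite_eigenvalues_symmetric[OF sym] .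
  show "is_eigenvalue A (lambda_min A)"
    using Min_in[OF fin] eig unfolding lambda_min_def by blast
  have "lambda_min A \<le> m"
    using Min_le[OF fin] eig unfolding lambda_min_def by blast
  then have "lambda_min A * (norm u)^2 \<le> m * (norm u)^2"
    by (simp add: mult_right_mono)
  also have "\<dots> \<le> u \<bullet> (A *v u)"
    by (rule rayleigh)
  finally show "lambda_min A * (norm u)^2 \<le> u \<bullet> (A *v u)" .
qed

lemma lambda_min_le_perturbed_form:
  fixes B H :: "real^'n^'n"
  assumes H_sym: "transpose H = H" and close: "mat_norm (B - H) \<le> \<delta>"
  shows "lambda_min H * (norm u)^2 \<le> u \<bullet> (B *v u) + \<delta> * (norm u)^2"
proof -
  have "\<bar>u \<bullet> ((B - H) *v u)\<bar> \<le> mat_norm (B - H) * (norm u)^2"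
    by (rule abs_quadratic_form_le)
  also have "\<dots> \<le> \<delta> * (norm u)^2"
    using close by (simp add: mult_right_mono)
  finally have "u \<bullet> (H *v u) \<le> u \<bullet> (B *v u) + \<delta> * (norm u)^2"
    by (simp add: matrix_vector_mult_diff_rdistrib inner_diff_right)
  with lambda_min_le_rayleigh[OF H_sym, of u] show ?thesis
    by linarith
qed

lemma eig_decomp_mult_vec:
  assumes "eig_decomp A lam v"
  shows "A *v w = (\<Sum>i\<in>{1..rank A}. (lam i * (v i \<bullet> w)) *\<^sub>R v i)"
proof -
  \<comment> \<open>naming rank A keeps the rewriting with dec from unfolding A inside it\<close>
  define r where "r = rank A"
  have dec: "A = (\<Sum>i\<in>{1..r}. lam i *\<^sub>R outer (v i))"
    using assms by (simp add: eig_decomp_def r_def)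
  have "A *v w = (\<Sum>i\<in>{1..r}. lam i *\<^sub>R outer (v i)) *v w"
    by (subst dec) (rule refl)
  then show ?thesis
    by (simp add: r_def sum_scaleR_matrix_vector_mult outer_mult_vec)
qed

lemma eig_decomp_symmetric:
  assumes "eig_decomp A lam v"
  shows "transpose A = A"
proof -
  define r where "r = rank A"
  have dec: "A = (\<Sum>i\<in>{1..r}. lam i *\<^sub>R outer (v i))"
    using assms by (simp add: eig_decomp_def r_def)
  show ?thesis
    by (subst (1 2) dec) (simp add: vec_eq_iff transpose_def outer_def mult_ac)
qed

lemma eig_decomp_inner_vector:
  assumes ed: "eig_decomp A lam v" and j: "j \<in> {1..rank A}"
  shows "(A *v w) \<bullet> v j = lam j * (v j \<bullet> w)"
proof -
  have orth: "i \<in> {1..rank A} \<Longrightarrow> v i \<bullet> v j = (if i = j then 1 else 0)" for i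
    using ed j unfolding eig_decomp_def by blast
  have "(A *v w) \<bullet> v j = (\<Sum>i\<in>{1..rank A}. lam i * (v i \<bullet> w) * (v i \<bullet> v j))"
    by (simp add: eig_decomp_mult_vec[OF ed] inner_sum_left)
  also have "\<dots> = (\<Sum>i\<in>{1..rank A}. if i = j then lam j * (v j \<bullet> w) else 0)"
    using orth by (intro sum.cong) auto
  also have "\<dots> = lam j * (v j \<bullet> w)"
    using j by simp
  finally show ?thesis .
qed

lemma eig_decomp_eigenvalue_le_mat_norm:
  assumes ed: "eig_decomp A lam v" and i: "i \<in> {1..rank A}"
  shows "lam i \<le> mat_norm A"
proof -
  have unit: "v i \<bullet> v i = 1"
    using ed i unfolding eig_decomp_def by simp
  have "lam i = (A *v v i) \<bullet> v i"
    using eig_decomp_inner_vector[OF ed i] unit by simp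
  also have "\<dots> \<le> \<bar>v i \<bullet> (A *v v i)\<bar>"
    by (simp add: inner_commute)
  also have "\<dots> \<le> mat_norm A * (norm (v i))^2"
    by (rule abs_quadratic_form_le)
  finally show ?thesis
    using unit by (simp add: power2_norm_eq_inner)
qed

lemma eig_decomp_nonzero_eigenvalue:
  assumes ed: "eig_decomp A lam v" and "is_eigenvalue A l" "l \<noteq> 0"
  shows "\<exists>j\<in>{1..rank A}. lam j = l"
proof (rule ccontr)
  assume no_index: "\<not> ?thesis"
  obtain w where w: "w \<noteq> 0" "A *v w = l *\<^sub>R w"
    using assms(2) unfolding is_eigenvalue_def by blast
  have "v j \<bullet> w = 0" if j: "j \<in> {1..rank A}" for j
  proof -
    have "(l - lam j) * (v j \<bullet> w) = 0"
      using eig_decomp_inner_vector[OF ed j, of w] w(2) by (simp add: inner_commute algebra_simps)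
    with no_index j show ?thesis by auto
  qed
  then have "l *\<^sub>R w = 0"
    using w(2) by (simp add: eig_decomp_mult_vec[OF ed])
  with w(1) \<open>l \<noteq> 0\<close> show False by simp
qed

lemma
  assumes ed: "eig_decomp A lam v" and "lambda_min A < 0"
  shows eig_decomp_rank_pos: "1 \<le> rank A"
    and eig_decomp_last_le_lambda_min: "lam (rank A) \<le> lambda_min A"
proof -
  obtain j where j: "j \<in> {1..rank A}" "lam j = lambda_min A"
    using eig_decomp_nonzero_eigenvalue[OF ed is_eigenvalue_lambda_min[OF eig_decomp_symmetric[OF ed]]]
      assms(2) by auto
  then show "1 \<le> rank A" by simp
  have "\<forall>i\<in>{1..rank A}. \<forall>k\<in>{1..rank A}. i \<le> k \<longrightarrow> lam k \<le> lam i"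
    using ed unfolding eig_decomp_def by blast
  then have "lam (rank A) \<le> lam j"
    using j(1) by simp
  with j(2) show "lam (rank A) \<le> lambda_min A"
    by simp
qed

lemma eig_decomp_compressed_form_le:
  fixes A :: "real^'n^'n" and P :: "real^'p^'n"
  assumes ed: "eig_decomp A lam v" and "mat_norm A \<le> M" "1 \<le> rank A"
    and cross: "\<And>i. i \<in> {1..<rank A} \<Longrightarrow> ((transpose P *v v i) \<bullet> u)^2 \<le> \<beta>"
  shows "u \<bullet> ((transpose P ** A ** P) *v u)
    \<le> lam (rank A) * ((transpose P *v v (rank A)) \<bullet> u)^2 + (real (rank A) - 1) * (M * \<beta>)"
proof -
  define r where "r = rank A"
  define c where "c i = (transpose P *v v i) \<bullet> u" for i
  have c_alt: "v i \<bullet> (P *v u) = c i" for i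
    unfolding c_def by (metis dot_lmul_matrix transpose_matrix_vector)
  have "u \<bullet> ((transpose P ** A ** P) *v u) = (P *v u) \<bullet> (A *v (P *v u))"
    by (metis dot_lmul_matrix inner_commute matrix_vector_mul_assoc transpose_matrix_vector)
  also have "\<dots> = (\<Sum>i\<in>{1..r}. lam i * (c i)^2)"
    by (simp add: eig_decomp_mult_vec[OF ed] inner_sum_right c_alt inner_commute[of "P *v u"] r_def
        power2_eq_square mult.assoc)
  also have "\<dots> = lam r * (c r)^2 + (\<Sum>i\<in>{1..<r}. lam i * (c i)^2)"
  proof -
    have "{1..r} = insert r {1..<r}"
      using \<open>1 \<le> rank A\<close> by (auto simp: r_def)
    then show ?thesis by simp
  qed
  also have "(\<Sum>i\<in>{1..<r}. lam i * (c i)^2) \<le> (\<Sum>i\<in>{1..<r}. M * \<beta>)"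
  proof (rule sum_mono)
    fix i assume i: "i \<in> {1..<r}"
    have "lam i * (c i)^2 \<le> M * (c i)^2"
      using eig_decomp_eigenvalue_le_mat_norm[OF ed, of i] i \<open>mat_norm A \<le> M\<close>
      by (intro mult_right_mono) (auto simp: r_def)
    also have "\<dots> \<le> M * \<beta>"
      using cross[of i] i mat_norm_nonneg[of A] \<open>mat_norm A \<le> M\<close>
      by (intro mult_left_mono) (auto simp: r_def c_def)
    finally show "lam i * (c i)^2 \<le> M * \<beta>" .
  qed
  also have "(\<Sum>i\<in>{1..<r}. M * \<beta>) = (real r - 1) * (M * \<beta>)"
    using \<open>1 \<le> rank A\<close> by (simp add: r_def)
  finally show ?thesis
    by (simp add: r_def c_def)
qed

lemma negative_curvature_bound:
  fixes A :: "real^'n^'n" and P :: "real^'p^'n" and H :: "real^'p^'p"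
  assumes ed: "eig_decomp A lam v"
    and A_bound: "mat_norm A \<le> M"
    and neg_curv: "lambda_min A \<le> - \<epsilon>" "0 < \<epsilon>"
    and \<alpha>: "\<alpha> < 1"
    and aligned_last: "1 - \<alpha> \<le> norm (transpose P *v v (rank A))"
    and aligned_cross: "\<And>i. i \<in> {1..<rank A} \<Longrightarrow>
          ((transpose P *v v i) \<bullet> (transpose P *v v (rank A)))^2 \<le> 4 * \<alpha>^2"
    and H_sym: "transpose H = H"
    and H_approx: "mat_norm (transpose P ** A ** P - H) \<le> \<delta>"
  shows "\<epsilon> * ((1 - \<alpha>)^2 - 4 * M * (real (rank A) - 1) * \<alpha>^2 / (\<epsilon> * (1 - \<alpha>)^2))
    \<le> - lambda_min H + \<delta>"
proof -
  define r where "r = rank A"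
  define u where "u = transpose P *v v r"
  define N where "N = (norm u)^2"
  define Q where "Q = (real r - 1) * (M * (4 * \<alpha>^2))"
  have "lambda_min A < 0"
    using neg_curv by linarith
  note r = eig_decomp_rank_pos[OF ed this] eig_decomp_last_le_lambda_min[OF ed this]
  have N_lower: "(1 - \<alpha>)^2 \<le> N"
    unfolding N_def u_def r_def using aligned_last \<alpha> by (intro power_mono) auto
  have "0 < (1 - \<alpha>)^2"
    using \<alpha> by simp
  with N_lower have "0 < N"
    by linarith
  have "0 \<le> Q"
    using r A_bound mat_norm_nonneg[of A] by (simp add: Q_def r_def)
  have "lambda_min H * N \<le> u \<bullet> ((transpose P ** A ** P) *v u) + \<delta> * N"
    unfolding N_def by (rule lambda_min_le_perturbed_form[OF H_sym H_approx])
  also have "u \<bullet> ((transpose P ** A ** P) *v u) \<le> lam r * N^2 + Q"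
    using eig_decomp_compressed_form_le[OF ed A_bound r(1), of P u "4 * \<alpha>^2"] aligned_cross
    by (simp add: u_def N_def Q_def r_def power2_norm_eq_inner)
  also have "lam r * N^2 + Q + \<delta> * N = (lam r * N + Q / N + \<delta>) * N"
    using \<open>0 < N\<close> by (simp add: field_simps power2_eq_square)
  finally have "lambda_min H \<le> lam r * N + Q / N + \<delta>"
    using \<open>0 < N\<close> by simp
  moreover have "lam r * N \<le> - \<epsilon> * (1 - \<alpha>)^2"
  proof -
    have "lam r * N \<le> lam r * (1 - \<alpha>)^2"
      using r neg_curv N_lower by (intro mult_left_mono_neg) (auto simp: r_def)
    also have "\<dots> \<le> - \<epsilon> * (1 - \<alpha>)^2"
      using r neg_curv by (intro mult_right_mono) (auto simp: r_def)
    finally show ?thesis .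
  qed
  moreover have "Q / N \<le> Q / (1 - \<alpha>)^2"
    using \<open>0 \<le> Q\<close> N_lower \<open>0 < (1 - \<alpha>)^2\<close> \<open>0 < N\<close>
    by (intro divide_left_mono) auto
  moreover have "\<epsilon> * ((1 - \<alpha>)^2 - 4 * M * (real r - 1) * \<alpha>^2 / (\<epsilon> * (1 - \<alpha>)^2))
      = \<epsilon> * (1 - \<alpha>)^2 - Q / (1 - \<alpha>)^2"
    using neg_curv(2) \<alpha> by (simp add: Q_def field_simps)
  ultimately show ?thesis
    by (simp add: r_def)
qed

lemma well_aligned_negative_curvature_bound:
  fixes A :: "real^'n^'n" and P :: "real^'p^'n" and H :: "real^'p^'p"
  assumes "well_aligned \<alpha> Pmax P G A" "mat_norm A \<le> M" "lambda_min A \<le> - \<epsilon>" "0 < \<epsilon>" "\<alpha> < 1"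
    and "transpose H = H" "mat_norm (transpose P ** A ** P - H) \<le> \<delta>"
  shows "\<epsilon> * ((1 - \<alpha>)^2 - 4 * M * (real (rank A) - 1) * \<alpha>^2 / (\<epsilon> * (1 - \<alpha>)^2))
    \<le> - lambda_min H + \<delta>"
proof -
  obtain lam v where "eig_decomp A lam v"
    and "1 - \<alpha> \<le> norm (transpose P *v v (rank A))"
    and "\<And>i. i \<in> {1..<rank A} \<Longrightarrow>
           ((transpose P *v v i) \<bullet> (transpose P *v v (rank A)))^2 \<le> 4 * \<alpha>^2"
    using assms(1) unfolding well_aligned_def Let_def by blast
  with assms(2-7) show ?thesis
    by (intro negative_curvature_bound)
qed

lemma well_aligned_large_gradient_bound:
  fixes P :: "real^'p^'n"
  assumes "well_aligned \<alpha> Pmax P G A" "\<epsilon> \<le> norm G" "\<alpha> < 1"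
    and "norm (transpose P *v G - g) \<le> \<kappa> * D^2" "0 \<le> \<kappa>" "0 \<le> D" "D \<le> Dmax"
  shows "(1 - \<alpha>) * \<epsilon> \<le> norm g + \<kappa> * Dmax * D"
proof -
  have "(1 - \<alpha>) * \<epsilon> \<le> (1 - \<alpha>) * norm G"
    using assms(2,3) by simp
  also have "\<dots> \<le> norm (transpose P *v G)"
    using assms(1) by (simp add: well_aligned_def)
  also have "\<dots> \<le> norm g + \<kappa> * D^2"
    using assms(4) norm_triangle_ineq2[of "transpose P *v G" g] by linarith
  finally have "(1 - \<alpha>) * \<epsilon> \<le> norm g + \<kappa> * D^2" .
  moreover have "\<kappa> * D^2 \<le> \<kappa> * Dmax * D"
    using assms(5-7) by (simp add: power2_eq_square mult.assoc mult_left_mono mult_right_mono)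
  ultimately show ?thesis
    by linarith
qed

lemma trust_radius_le_max:
  fixes \<Delta> :: "nat \<Rightarrow> real"
  assumes "\<Delta> 0 \<le> \<Delta>max" "\<gamma>dec \<le> 1" "\<And>j. 0 \<le> \<Delta> j"
    and update: "\<And>j. \<Delta> (Suc j) = min (\<gamma>inc * \<Delta> j) \<Delta>max \<or> \<Delta> (Suc j) = \<gamma>dec * \<Delta> j"
  shows "\<Delta> j \<le> \<Delta>max"
proof (induction j)
  case 0
  show ?case by (rule assms(1))
next
  case (Suc j)
  have "\<gamma>dec * \<Delta> j \<le> \<Delta> j"
    using mult_right_mono[OF assms(2) assms(3)[of j]] by simp
  with Suc update[of j] show ?case
    by auto
qed

lemma le_add_radius_imp_div_le:
  fixes a \<sigma> \<kappa> \<mu> D :: real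
  assumes "a \<le> \<sigma> + \<kappa> * D" "\<mu> * D \<le> \<sigma>" "0 < \<mu>" "0 \<le> \<kappa>"
  shows "a / (1 + \<kappa> / \<mu>) \<le> \<sigma>"
proof -
  have "\<kappa> * D \<le> \<kappa> * (\<sigma> / \<mu>)"
    using assms(2-4) by (intro mult_left_mono) (simp_all add: le_divide_eq mult.commute)
  with assms(1) have "a \<le> \<sigma> * (1 + \<kappa> / \<mu>)"
    by (simp add: algebra_simps)
  moreover have "0 < 1 + \<kappa> / \<mu>"
    using assms(3,4) by (simp add: add_pos_nonneg)
  ultimately show ?thesis
    by (simp add: divide_le_eq)
qed

theorem lemma3p9:
  fixes f :: "real^'n \<Rightarrow> real"
    and grad :: "real^'n \<Rightarrow> real^'n"
    and hess :: "real^'n \<Rightarrow> real^'n^'n"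
    and x :: "nat \<Rightarrow> real^'n"
    and P :: "nat \<Rightarrow> real^'p^'n"
    and g :: "nat \<Rightarrow> real^'p"
    and H :: "nat \<Rightarrow> real^'p^'p"
    and s :: "nat \<Rightarrow> real^'p"
    and \<Delta> :: "nat \<Rightarrow> real"
    and x0 :: "real^'n"
    and \<Delta>0 \<Delta>max \<gamma>dec \<gamma>inc \<eta> \<mu> \<kappa>ef \<kappa>eg \<kappa>eh flow LH M \<alpha> Pmax \<epsilon> :: real
    and k :: nat
  assumes dims: "CARD('p) \<le> CARD('n)"
    and f_deriv: "\<And>y. (f has_derivative (\<lambda>h. grad y \<bullet> h)) (at y)"
    and grad_deriv: "\<And>y. (grad has_derivative (\<lambda>h. hess y *v h)) (at y)"
    and hess_cont: "continuous_on UNIV hess"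
    and hess_lip: "\<And>y z. mat_norm (hess y - hess z) \<le> LH * dist y z"
    and f_low: "\<And>y. flow \<le> f y"
    and M_pos: "M > 0"
    and hess_bd: "\<And>j. mat_norm (hess (x j)) \<le> M"
    and params: "0 < \<Delta>0" "\<Delta>0 \<le> \<Delta>max" "0 < \<gamma>dec" "\<gamma>dec < 1" "1 < \<gamma>inc"
                "0 < \<eta>" "\<eta> < 1" "0 < \<mu>"
    and kappas: "\<kappa>ef > 0" "\<kappa>eg > 0" "\<kappa>eh > 0"
    and init: "x 0 = x0" "\<Delta> 0 = \<Delta>0"
    and H_sym: "\<And>j. transpose (H j) = H j"
    and fq_f: "\<And>j sh. norm sh \<le> \<Delta> j \<Longrightarrow>
               \<bar>f (x j + P j *v sh) - qmodel (f (x j)) (g j) (H j) sh\<bar> \<le> \<kappa>ef * \<Delta> j ^ 3"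
    and fq_g: "\<And>j sh. norm sh \<le> \<Delta> j \<Longrightarrow>
               norm (transpose (P j) *v grad (x j + P j *v sh) - (g j + H j *v sh)) \<le> \<kappa>eg * \<Delta> j ^ 2"
    and fq_h: "\<And>j sh. norm sh \<le> \<Delta> j \<Longrightarrow>
               mat_norm (transpose (P j) ** hess (x j + P j *v sh) ** P j - H j) \<le> \<kappa>eh * \<Delta> j"
    and step_bd: "\<And>j. norm (s j) \<le> \<Delta> j"
    and update: "\<And>j. if successful \<eta> \<mu> (f (x j)) (f (x j + P j *v s j)) (g j) (H j) (s j) (\<Delta> j)
                      then x (Suc j) = x j + P j *v s j \<and> \<Delta> (Suc j) = min (\<gamma>inc * \<Delta> j) \<Delta>max
                      else x (Suc j) = x j \<and> \<Delta> (Suc j) = \<gamma>dec * \<Delta> j"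
    and alpha: "0 < \<alpha>" "\<alpha> < 1"
    and Pmax_pos: "Pmax > 0"
    and eps_pos: "\<epsilon> > 0"
    and theta_pos: "(1 - \<alpha>)^2 - 4 * M * (real (rank (hess (x k))) - 1) * \<alpha>^2 / (\<epsilon> * (1 - \<alpha>)^2) > 0"
    and aligned: "well_aligned \<alpha> Pmax (P k) (grad (x k)) (hess (x k))"
    and crit: "sigma_crit (grad (x k)) (hess (x k)) \<ge> \<epsilon>"
    and succ: "successful \<eta> \<mu> (f (x k)) (f (x k + P k *v s k)) (g k) (H k) (s k) (\<Delta> k)"
  shows "sigma_model (g k) (H k) \<ge>
     (min (1 - \<alpha>) (min ((1 - \<alpha>)^2)
        ((1 - \<alpha>)^2 - 4 * M * (real (rank (hess (x k))) - 1) * \<alpha>^2 / (\<epsilon> * (1 - \<alpha>)^2)))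
      / (1 + max (\<kappa>eg * \<Delta>max) \<kappa>eh / \<mu>)) * \<epsilon>"
proof -
  define A where "A = hess (x k)"
  define \<sigma> where "\<sigma> = sigma_model (g k) (H k)"
  define \<kappa>\<sigma> where "\<kappa>\<sigma> = max (\<kappa>eg * \<Delta>max) \<kappa>eh"
  define \<theta> where "\<theta> = (1 - \<alpha>)^2 - 4 * M * (real (rank A) - 1) * \<alpha>^2 / (\<epsilon> * (1 - \<alpha>)^2)"
  define c where "c = min (1 - \<alpha>) (min ((1 - \<alpha>)^2) \<theta>)"
  have radius_nonneg: "0 \<le> \<Delta> j" for j
    using step_bd[of j] norm_ge_zero order_trans by blast
  have radius_le_max: "\<Delta> k \<le> \<Delta>max"
    using trust_radius_le_max[of \<Delta> \<Delta>max \<gamma>dec \<gamma>inc] init params radius_nonneg update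
    by (metis order_less_imp_le)
  have "c * \<epsilon> \<le> \<sigma> + \<kappa>\<sigma> * \<Delta> k"
  proof (cases "\<epsilon> \<le> norm (grad (x k))")
    case True
    with aligned have "(1 - \<alpha>) * \<epsilon> \<le> norm (g k) + \<kappa>eg * \<Delta>max * \<Delta> k"
      using alpha fq_g[of 0 k] kappas radius_nonneg[of k] radius_le_max
      by (intro well_aligned_large_gradient_bound) auto
    moreover have "c * \<epsilon> \<le> (1 - \<alpha>) * \<epsilon>" "\<kappa>eg * \<Delta>max * \<Delta> k \<le> \<kappa>\<sigma> * \<Delta> k"
      using eps_pos radius_nonneg[of k] by (simp_all add: c_def \<kappa>\<sigma>_def mult_right_mono)
    ultimately show ?thesis
      by (simp add: \<sigma>_def sigma_model_def)
  next
    case False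
    then have "lambda_min A \<le> - \<epsilon>"
      using crit eps_pos by (auto simp: sigma_crit_def tau_crit_def A_def)
    with aligned have "\<epsilon> * \<theta> \<le> - lambda_min (H k) + \<kappa>eh * \<Delta> k"
      unfolding \<theta>_def A_def
      using hess_bd[of k] eps_pos alpha H_sym[of k] fq_h[of 0 k] radius_nonneg[of k]
      by (intro well_aligned_negative_curvature_bound) auto
    moreover have "c * \<epsilon> \<le> \<theta> * \<epsilon>" "\<kappa>eh * \<Delta> k \<le> \<kappa>\<sigma> * \<Delta> k"
      using eps_pos radius_nonneg[of k] by (simp_all add: c_def \<kappa>\<sigma>_def mult_right_mono)
    ultimately show ?thesis
      by (simp add: \<sigma>_def sigma_model_def mult.commute)
  qed
  then have "c * \<epsilon> / (1 + \<kappa>\<sigma> / \<mu>) \<le> \<sigma>"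
    using succ params kappas
    by (intro le_add_radius_imp_div_le[where D = "\<Delta> k"]) (auto simp: successful_def \<sigma>_def \<kappa>\<sigma>_def)
  then show ?thesis
    by (simp add: c_def \<theta>_def \<kappa>\<sigma>_def \<sigma>_def A_def)
qed

end
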